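(* Let $\alpha>0$ and $\beta>0$ be real numbers. A $2\times 2$ table $P=\begin{pmatrix} p_{00} & p_{01}\\ p_{10} & p_{11}\end{pmatrix}$ (i.e. $p_{ij}>0$ for all $i,j\in\{0,1\}$ and $p_{00}+p_{01}+p_{10}+p_{11}=1$) satisfies \[ \frac{p_{00}p_{11}}{p_{01}p_{10}}=\alpha^2 \quad\text{and}\quad \frac{p_{00}p_{10}}{p_{01}p_{11}}=\beta^2 \] if and only if there exists a real number $v$ with $0<v<\frac{1}{\alpha+\beta}$ such that \[ P=\begin{pmatrix} \frac{\beta}{\beta+\frac{1}{\alpha}}\,[1-(\beta+\alpha)v] & \frac{1}{\alpha\beta+1}\,[1-(\beta+\alpha)v]\\ \beta v & \alpha v\end{pmatrix}. \]
   Context: A $2\times 2$ table is a point of the open probability simplex $\Delta=\{(p_{ij})\in\mathbb{A}^4: \sum p_{ij}=1,\ p_{ij}>0\}$. The odds ratios are $r_\times=\frac{p_{00}p_{11}}{p_{01}p_{10}}$ and $r_{||}=\frac{p_{00}p_{10}}{p_{01}p_{11}}$, written as $r_\times=\alpha^2$, $r_{||}=\beta^2$ with $\alpha,\beta>0$. *)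

theory Defs
  imports Complex_Main
begin

definition table2x2 :: "real \<Rightarrow> real \<Rightarrow> real \<Rightarrow> real \<Rightarrow> bool" where
  "table2x2 p00 p01 p10 p11 \<longleftrightarrow>
     p00 > 0 \<and> p01 > 0 \<and> p10 > 0 \<and> p11 > 0 \<and> p00 + p01 + p10 + p11 = 1"

end

theory Submission
  imports Defs
begin

text \<open>Multiplying and dividing the two odds ratios gives \<open>(p00/p01)\<^sup>2 = (\<alpha>\<beta>)\<^sup>2\<close> and
  \<open>(p11/p10)\<^sup>2 = (\<alpha>/\<beta>)\<^sup>2\<close>; by positivity the two odds-ratio constraints are therefore the
  linear constraints \<open>p00 = \<alpha>\<beta> p01\<close> and \<open>\<beta> p11 = \<alpha> p10\<close>. On the simplex these cut out a
  segment, parametrised by \<open>v = p10/\<beta>\<close>; its endpoints \<open>v = 0\<close> and \<open>v = 1/(\<alpha>+\<beta>)\<close> are where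
  \<open>p10\<close> resp. \<open>p01\<close> vanish.\<close>

lemma odds_ratios_eq_squares_iff_linear:
  fixes \<alpha> \<beta> p00 p01 p10 p11 :: real
  assumes "\<alpha> > 0" "\<beta> > 0" "p00 > 0" "p01 > 0" "p10 > 0" "p11 > 0"
  shows "(p00 * p11 / (p01 * p10) = \<alpha>^2 \<and> p00 * p10 / (p01 * p11) = \<beta>^2) \<longleftrightarrow>
    (p00 = \<alpha> * \<beta> * p01 \<and> \<beta> * p11 = \<alpha> * p10)"
proof
  assume odds: "p00 * p11 / (p01 * p10) = \<alpha>^2 \<and> p00 * p10 / (p01 * p11) = \<beta>^2"
  have "(p00 / p01)^2 = (p00 * p11 / (p01 * p10)) * (p00 * p10 / (p01 * p11))"
    using assms by (simp add: field_simps power2_eq_square)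
  also have "\<dots> = (\<alpha> * \<beta>)^2"
    using odds by (simp add: power_mult_distrib)
  finally have "p00 / p01 = \<alpha> * \<beta>"
    using assms by (simp add: power2_eq_iff_nonneg)
  moreover have "(p11 / p10)^2 = (p00 * p11 / (p01 * p10)) / (p00 * p10 / (p01 * p11))"
    using assms by (simp add: field_simps power2_eq_square)
  hence "(p11 / p10)^2 = (\<alpha> / \<beta>)^2"
    using odds by (simp add: power_divide)
  hence "p11 / p10 = \<alpha> / \<beta>"
    using assms by (simp add: power2_eq_iff_nonneg)
  ultimately show "p00 = \<alpha> * \<beta> * p01 \<and> \<beta> * p11 = \<alpha> * p10"
    using assms by (simp add: field_simps)
next
  assume "p00 = \<alpha> * \<beta> * p01 \<and> \<beta> * p11 = \<alpha> * p10"
  then show "p00 * p11 / (p01 * p10) = \<alpha>^2 \<and> p00 * p10 / (p01 * p11) = \<beta>^2"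
    using assms by (auto simp: field_simps power2_eq_square)
qed

lemma linear_constraints_on_plane_iff_segment:
  fixes \<alpha> \<beta> p00 p01 p10 p11 :: real
  assumes "\<alpha> > 0" "\<beta> > 0"
  shows "(p00 = \<alpha> * \<beta> * p01 \<and> \<beta> * p11 = \<alpha> * p10 \<and> p00 + p01 + p10 + p11 = 1) \<longleftrightarrow>
    (\<exists>v. p00 = \<beta> / (\<beta> + 1 / \<alpha>) * (1 - (\<beta> + \<alpha>) * v) \<and>
         p01 = 1 / (\<alpha> * \<beta> + 1) * (1 - (\<beta> + \<alpha>) * v) \<and>
         p10 = \<beta> * v \<and> p11 = \<alpha> * v)"
proof -
  have pos: "\<alpha> * \<beta> + 1 > 0"
    using assms by (simp add: add_pos_pos)
  have coeff: "\<beta> / (\<beta> + 1 / \<alpha>) = \<alpha> * \<beta> / (\<alpha> * \<beta> + 1)"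
    using assms by (simp add: field_simps)
  show ?thesis
  proof
    assume lin: "p00 = \<alpha> * \<beta> * p01 \<and> \<beta> * p11 = \<alpha> * p10 \<and> p00 + p01 + p10 + p11 = 1"
    define v where "v = p10 / \<beta>"
    have p10: "p10 = \<beta> * v" and p11: "p11 = \<alpha> * v"
      using lin assms unfolding v_def by (simp_all add: field_simps)
    have "(\<alpha> * \<beta> + 1) * p01 = 1 - (\<beta> + \<alpha>) * v"
      using lin p10 p11 by (simp add: algebra_simps)
    then have p01: "p01 = 1 / (\<alpha> * \<beta> + 1) * (1 - (\<beta> + \<alpha>) * v)"
      using pos by (simp add: field_simps)
    have "p00 = \<beta> / (\<beta> + 1 / \<alpha>) * (1 - (\<beta> + \<alpha>) * v)"
      unfolding coeff using lin p01 by simp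
    with p01 p10 p11 show "\<exists>v. p00 = \<beta> / (\<beta> + 1 / \<alpha>) * (1 - (\<beta> + \<alpha>) * v) \<and>
         p01 = 1 / (\<alpha> * \<beta> + 1) * (1 - (\<beta> + \<alpha>) * v) \<and> p10 = \<beta> * v \<and> p11 = \<alpha> * v"
      by blast
  next
    assume "\<exists>v. p00 = \<beta> / (\<beta> + 1 / \<alpha>) * (1 - (\<beta> + \<alpha>) * v) \<and>
         p01 = 1 / (\<alpha> * \<beta> + 1) * (1 - (\<beta> + \<alpha>) * v) \<and> p10 = \<beta> * v \<and> p11 = \<alpha> * v"
    then obtain v where
        p00: "p00 = \<alpha> * \<beta> / (\<alpha> * \<beta> + 1) * (1 - (\<beta> + \<alpha>) * v)"
      and p01: "p01 = 1 / (\<alpha> * \<beta> + 1) * (1 - (\<beta> + \<alpha>) * v)"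
      and p10: "p10 = \<beta> * v" and p11: "p11 = \<alpha> * v"
      unfolding coeff by blast
    have ratio: "p00 = \<alpha> * \<beta> * p01"
      using p00 p01 by simp
    have "p00 + p01 = (\<alpha> * \<beta> + 1) * p01"
      using ratio by (simp add: algebra_simps)
    also have "\<dots> = 1 - (\<beta> + \<alpha>) * v"
      using p01 pos by simp
    finally show "p00 = \<alpha> * \<beta> * p01 \<and> \<beta> * p11 = \<alpha> * p10 \<and> p00 + p01 + p10 + p11 = 1"
      using ratio p10 p11 by (simp add: algebra_simps)
  qed
qed

theorem proposition2p2:
  fixes \<alpha> \<beta> p00 p01 p10 p11 :: real
  assumes "\<alpha> > 0" and "\<beta> > 0"
    and "table2x2 p00 p01 p10 p11"
  shows "(p00 * p11 / (p01 * p10) = \<alpha>^2 \<and> p00 * p10 / (p01 * p11) = \<beta>^2) \<longleftrightarrow>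
    (\<exists>v::real. 0 < v \<and> v < 1 / (\<alpha> + \<beta>) \<and>
       p00 = \<beta> / (\<beta> + 1 / \<alpha>) * (1 - (\<beta> + \<alpha>) * v) \<and>
       p01 = 1 / (\<alpha> * \<beta> + 1) * (1 - (\<beta> + \<alpha>) * v) \<and>
       p10 = \<beta> * v \<and>
       p11 = \<alpha> * v)"
proof -
  have p: "p00 > 0" "p01 > 0" "p10 > 0" "p11 > 0" "p00 + p01 + p10 + p11 = 1"
    using assms(3) unfolding table2x2_def by auto
  have bounds: "0 < v \<and> v < 1 / (\<alpha> + \<beta>)"
    if "p01 = 1 / (\<alpha> * \<beta> + 1) * (1 - (\<beta> + \<alpha>) * v)" "p10 = \<beta> * v" for v
  proof -
    have "\<alpha> * \<beta> + 1 > 0" using assms(1,2) by (simp add: add_pos_pos)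
    then have "1 - (\<beta> + \<alpha>) * v = (\<alpha> * \<beta> + 1) * p01"
      using that(1) by simp
    also have "\<dots> > 0" using \<open>\<alpha> * \<beta> + 1 > 0\<close> p(2) by simp
    finally have "(\<beta> + \<alpha>) * v < 1" by simp
    moreover have "v > 0" using that(2) p(3) assms(2) by (simp add: zero_less_mult_iff)
    ultimately show ?thesis using assms(1,2) by (simp add: field_simps)
  qed
  show ?thesis
    unfolding odds_ratios_eq_squares_iff_linear[OF assms(1,2) p(1-4)]
    using linear_constraints_on_plane_iff_segment[OF assms(1,2)] p(5) bounds
    by blast
qed

end
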